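(* For all $1\le i,j,l\le m$: (1) $(D_jD_i\Omega,\bar\Omega)=0$; (2) $(D_jD_i\Omega,\overline{D_l\Omega})=0$; (3) $D_jD_i\Omega=D_iD_j\Omega$.
   Context: $\mathcal M$ is the moduli space of polarized Calabi–Yau $n$-folds ($n\ge3$), of complex dimension $m$, with local holomorphic coordinates $z_1,\dots,z_m$, $\partial_i=\partial/\partial z_i$. Locally the primitive middle cohomology of the fibres is identified with one fixed space $H$. $Q(\phi,\psi)=(-1)^{n(n-1)/2}\int\phi\wedge\psi$, $(\xi,\eta)=(\sqrt{-1})^nQ(\xi,\eta)$. $\Omega$ is a nonzero local holomorphic section of the Hodge bundle $F^n$. Weil–Petersson metric $g_{i\bar j}=-\partial_i\bar\partial_j\log(\Omega,\bar\Omega)$, inverse $g^{i\bar j}$, Christoffel symbols $\Gamma^k_{ij}=g^{k\bar q}\partial_jg_{i\bar q}$. $K_i=-\partial_i\log(\Omega,\bar\Omega)$, $D_i\Omega=\partial_i\Omega+K_i\Omega$, $D_jD_i\Omega=\partial_jD_i\Omega-\sum_k\Gamma^k_{ij}D_k\Omega+K_jD_i\Omega$. *)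

theory Defs
  imports "HOL-Analysis.Analysis"
begin

text \<open>Local holomorphic coordinates z = (z_1,...,z_m) are points of complex^'m
 (index type 'm, m = CARD('m)).  The fixed space H of primitive middle cohomology
 is modelled as complex^'k with its real structure given by componentwise conjugation.\<close>

definition wd :: "(complex^'m \<Rightarrow> complex) \<Rightarrow> 'm \<Rightarrow> complex^'m \<Rightarrow> complex" where
  "wd f i z = (frechet_derivative f (at z) (axis i 1)
               - \<i> * frechet_derivative f (at z) (axis i \<i>)) / 2"

definition wdbar :: "(complex^'m \<Rightarrow> complex) \<Rightarrow> 'm \<Rightarrow> complex^'m \<Rightarrow> complex" where
  "wdbar f i z = (frechet_derivative f (at z) (axis i 1)
               + \<i> * frechet_derivative f (at z) (axis i \<i>)) / 2"

definition vwd :: "(complex^'m \<Rightarrow> complex^'k) \<Rightarrow> 'm \<Rightarrow> complex^'m \<Rightarrow> complex^'k" where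
  "vwd F i z = (\<chi> a. wd (\<lambda>w. F w $ a) i z)"

definition vcnj :: "complex^'k \<Rightarrow> complex^'k" where
  "vcnj v = (\<chi> a. cnj (v $ a))"

definition holo_on :: "(complex^'m) set \<Rightarrow> (complex^'m \<Rightarrow> complex^'k) \<Rightarrow> bool" where
  "holo_on U F \<longleftrightarrow> (\<forall>a. \<forall>z\<in>U. \<exists>f'. ((\<lambda>w. F w $ a) has_derivative f') (at z)
                         \<and> (\<forall>v. f' (\<i> *s v) = \<i> * f' v))"

text \<open>The intersection pairing Q(phi,psi) = (-1)^(n(n-1)/2) int phi wedge psi, where the
 bilinear form int phi wedge psi on H is given by the matrix Qm.\<close>
definition Qform :: "nat \<Rightarrow> complex^'k^'k \<Rightarrow> complex^'k \<Rightarrow> complex^'k \<Rightarrow> complex" where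
  "Qform n Qm \<phi> \<psi> = (-1) ^ (n * (n - 1) div 2) * (\<Sum>a\<in>UNIV. \<Sum>b\<in>UNIV. \<phi> $ a * Qm $ a $ b * \<psi> $ b)"

definition pair :: "nat \<Rightarrow> complex^'k^'k \<Rightarrow> complex^'k \<Rightarrow> complex^'k \<Rightarrow> complex" where
  "pair n Qm \<xi> \<eta> = \<i> ^ n * Qform n Qm \<xi> \<eta>"

definition normsq :: "nat \<Rightarrow> complex^'k^'k \<Rightarrow> (complex^'m \<Rightarrow> complex^'k) \<Rightarrow> complex^'m \<Rightarrow> complex" where
  "normsq n Qm \<Omega> z = pair n Qm (\<Omega> z) (vcnj (\<Omega> z))"

definition wp :: "nat \<Rightarrow> complex^'k^'k \<Rightarrow> (complex^'m \<Rightarrow> complex^'k) \<Rightarrow> complex^'m \<Rightarrow> complex^'m^'m" where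
  "wp n Qm \<Omega> z = (\<chi> i j. - wd (\<lambda>w. wdbar (\<lambda>u. Ln (normsq n Qm \<Omega> u)) j w) i z)"

text \<open>Inverse metric g^{k qbar}, characterised by sum_q g^{k qbar} g_{p qbar} = delta_kp.\<close>
definition wpinv :: "nat \<Rightarrow> complex^'k^'k \<Rightarrow> (complex^'m \<Rightarrow> complex^'k) \<Rightarrow> complex^'m \<Rightarrow> complex^'m^'m" where
  "wpinv n Qm \<Omega> z = matrix_inv (transpose (wp n Qm \<Omega> z))"

definition Chr :: "nat \<Rightarrow> complex^'k^'k \<Rightarrow> (complex^'m \<Rightarrow> complex^'k) \<Rightarrow> 'm \<Rightarrow> 'm \<Rightarrow> 'm \<Rightarrow> complex^'m \<Rightarrow> complex" where
  "Chr n Qm \<Omega> k i j z = (\<Sum>q\<in>UNIV. wpinv n Qm \<Omega> z $ k $ q * wd (\<lambda>w. wp n Qm \<Omega> w $ i $ q) j z)"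

definition Kc :: "nat \<Rightarrow> complex^'k^'k \<Rightarrow> (complex^'m \<Rightarrow> complex^'k) \<Rightarrow> 'm \<Rightarrow> complex^'m \<Rightarrow> complex" where
  "Kc n Qm \<Omega> i z = - wd (\<lambda>w. Ln (normsq n Qm \<Omega> w)) i z"

definition D1 :: "nat \<Rightarrow> complex^'k^'k \<Rightarrow> (complex^'m \<Rightarrow> complex^'k) \<Rightarrow> 'm \<Rightarrow> complex^'m \<Rightarrow> complex^'k" where
  "D1 n Qm \<Omega> i z = vwd \<Omega> i z + Kc n Qm \<Omega> i z *s \<Omega> z"

definition D2 :: "nat \<Rightarrow> complex^'k^'k \<Rightarrow> (complex^'m \<Rightarrow> complex^'k) \<Rightarrow> 'm \<Rightarrow> 'm \<Rightarrow> complex^'m \<Rightarrow> complex^'k" where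
  "D2 n Qm \<Omega> j i z = vwd (D1 n Qm \<Omega> i) j z
      - (\<Sum>k\<in>UNIV. Chr n Qm \<Omega> k i j z *s D1 n Qm \<Omega> k z)
      + Kc n Qm \<Omega> j z *s D1 n Qm \<Omega> i z"

end

theory Submission
  imports Defs "HOL-Complex_Analysis.Cauchy_Integral_Formula"
begin

text \<open>
  \<open>D\<^sub>i\<Omega> = \<partial>\<^sub>i\<Omega> + K\<^sub>i\<Omega>\<close> is the part of \<open>\<partial>\<^sub>i\<Omega>\<close> orthogonal to \<open>\<Omega>\<close>, i.e. \<open>(D\<^sub>i\<Omega>, \<Omega>\<^bsup>-\<^esup>) = 0\<close>, and the
  Weil--Petersson metric is \<open>g\<^sub>i\<^sub>q = -(D\<^sub>i\<Omega>, D\<^sub>q\<Omega>\<^bsup>-\<^esup>) / (\<Omega>, \<Omega>\<^bsup>-\<^esup>)\<close>. Put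
  \<open>T\<^sub>j\<^sub>i = \<partial>\<^sub>jD\<^sub>i\<Omega> + K\<^sub>jD\<^sub>i\<Omega>\<close>, so that \<open>D\<^sub>jD\<^sub>i\<Omega> = T\<^sub>j\<^sub>i - \<Gamma>\<^sup>k\<^sub>i\<^sub>j D\<^sub>k\<Omega>\<close>. Since \<open>\<Omega>\<close> is holomorphic, the
  antiholomorphic factors of these pairings contribute nothing when \<open>\<partial>\<^sub>j\<close> is applied, so differentiating
  the two identities gives \<open>(T\<^sub>j\<^sub>i, \<Omega>\<^bsup>-\<^esup>) = 0\<close> and \<open>\<partial>\<^sub>jg\<^sub>i\<^sub>q = -(T\<^sub>j\<^sub>i, D\<^sub>q\<Omega>\<^bsup>-\<^esup>) / (\<Omega>, \<Omega>\<^bsup>-\<^esup>)\<close>.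
  \<open>T\<^sub>j\<^sub>i\<close> is symmetric because second derivatives of holomorphic maps commute, hence so is
  \<open>\<Gamma>\<^sup>k\<^sub>i\<^sub>j = g\<^sup>k\<^sup>q \<partial>\<^sub>jg\<^sub>i\<^sub>q\<close>, and \<open>\<Gamma>\<^sup>k\<^sub>i\<^sub>j g\<^sub>k\<^sub>l = \<partial>\<^sub>jg\<^sub>i\<^sub>l\<close> cancels \<open>(T\<^sub>j\<^sub>i, D\<^sub>l\<Omega>\<^bsup>-\<^esup>)\<close>.
  Holomorphy of the partial derivatives of a holomorphic map of several variables, and the symmetry
  of its second derivatives, come from the one-variable Cauchy formula differentiated under the
  integral sign.
\<close>

section \<open>Wirtinger derivatives\<close>

lemma wd_eq_derivative:
  "(f has_derivative f') (at z) \<Longrightarrow> wd f i z = (f' (axis i 1) - \<i> * f' (axis i \<i>)) / 2"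
  unfolding wd_def by (metis frechet_derivative_at)

lemma wdbar_eq_derivative:
  "(f has_derivative f') (at z) \<Longrightarrow> wdbar f i z = (f' (axis i 1) + \<i> * f' (axis i \<i>)) / 2"
  unfolding wdbar_def by (metis frechet_derivative_at)

lemmas has_frechet_derivative = frechet_derivative_works[THEN iffD1]

lemma wd_add:
  assumes "f differentiable (at z)" "g differentiable (at z)"
  shows "wd (\<lambda>w. f w + g w) i z = wd f i z + wd g i z"
    and "wdbar (\<lambda>w. f w + g w) i z = wdbar f i z + wdbar g i z"
proof -
  note d = has_derivative_add[OF assms[THEN has_frechet_derivative]]
  show "wd (\<lambda>w. f w + g w) i z = wd f i z + wd g i z"
    unfolding wd_eq_derivative[OF d] by (simp add: wd_def field_simps)
  show "wdbar (\<lambda>w. f w + g w) i z = wdbar f i z + wdbar g i z"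
    unfolding wdbar_eq_derivative[OF d] by (simp add: wdbar_def field_simps)
qed

lemma wd_minus:
  assumes "f differentiable (at z)"
  shows "wd (\<lambda>w. - f w) i z = - wd f i z"
  unfolding wd_eq_derivative[OF has_derivative_minus[OF assms[THEN has_frechet_derivative]]]
  by (simp add: wd_def field_simps)

lemma wd_mult:
  assumes "f differentiable (at z)" "g differentiable (at z)"
  shows "wd (\<lambda>w. f w * g w) i z = f z * wd g i z + wd f i z * g z"
    and "wdbar (\<lambda>w. f w * g w) i z = f z * wdbar g i z + wdbar f i z * g z"
proof -
  note d = has_derivative_mult[OF assms[THEN has_frechet_derivative]]
  show "wd (\<lambda>w. f w * g w) i z = f z * wd g i z + wd f i z * g z"
    unfolding wd_eq_derivative[OF d] by (simp add: wd_def field_simps)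
  show "wdbar (\<lambda>w. f w * g w) i z = f z * wdbar g i z + wdbar f i z * g z"
    unfolding wdbar_eq_derivative[OF d] by (simp add: wdbar_def field_simps)
qed

lemma wd_divide:
  assumes "f differentiable (at z)" "g differentiable (at z)" "g z \<noteq> 0"
  shows "wd (\<lambda>w. f w / g w) i z = (wd f i z * g z - f z * wd g i z) / (g z)\<^sup>2"
proof -
  note d = has_derivative_divide'[OF assms(1,2)[THEN has_frechet_derivative] assms(3)]
  show ?thesis
    unfolding wd_eq_derivative[OF d] using assms(3) by (simp add: wd_def field_simps power2_eq_square)
qed

lemma wd_const: "wd (\<lambda>w. c) i z = 0" and wdbar_const: "wdbar (\<lambda>w. c) i z = 0"
  by (simp_all add: wd_def wdbar_def)

lemma wd_sum:
  assumes "finite S" "\<And>a. a \<in> S \<Longrightarrow> f a differentiable (at z)"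
  shows "wd (\<lambda>w. \<Sum>a\<in>S. f a w) i z = (\<Sum>a\<in>S. wd (f a) i z)"
    and "wdbar (\<lambda>w. \<Sum>a\<in>S. f a w) i z = (\<Sum>a\<in>S. wdbar (f a) i z)"
proof -
  have d: "((\<lambda>w. \<Sum>a\<in>S. f a w) has_derivative (\<lambda>v. \<Sum>a\<in>S. frechet_derivative (f a) (at z) v)) (at z)"
    using assms(2) by (intro has_derivative_sum) (simp add: has_frechet_derivative)
  show "wd (\<lambda>w. \<Sum>a\<in>S. f a w) i z = (\<Sum>a\<in>S. wd (f a) i z)"
    unfolding wd_eq_derivative[OF d]
    by (simp add: wd_def sum_divide_distrib[symmetric] sum_subtractf sum_distrib_left)
  show "wdbar (\<lambda>w. \<Sum>a\<in>S. f a w) i z = (\<Sum>a\<in>S. wdbar (f a) i z)"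
    unfolding wdbar_eq_derivative[OF d]
    by (simp add: wdbar_def sum_divide_distrib[symmetric] sum.distrib sum_distrib_left)
qed

lemma differentiable_cnj: "f differentiable (at z) \<Longrightarrow> (\<lambda>w. cnj (f w)) differentiable (at z)"
  using has_derivative_cnj[OF has_frechet_derivative] differentiableI by blast

lemma wd_cnj:
  assumes "f differentiable (at z)"
  shows "wd (\<lambda>w. cnj (f w)) i z = cnj (wdbar f i z)"
    and "wdbar (\<lambda>w. cnj (f w)) i z = cnj (wd f i z)"
proof -
  note d = has_derivative_cnj[OF assms[THEN has_frechet_derivative]]
  show "wd (\<lambda>w. cnj (f w)) i z = cnj (wdbar f i z)"
    unfolding wd_eq_derivative[OF d] by (simp add: wdbar_def field_simps)
  show "wdbar (\<lambda>w. cnj (f w)) i z = cnj (wd f i z)"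
    unfolding wdbar_eq_derivative[OF d] by (simp add: wd_def field_simps)
qed

lemma wd_Ln:
  assumes "f differentiable (at z)" "f z \<notin> \<real>\<^sub>\<le>\<^sub>0"
  shows "(\<lambda>w. Ln (f w)) differentiable (at z)"
    and "wd (\<lambda>w. Ln (f w)) i z = wd f i z / f z"
    and "wdbar (\<lambda>w. Ln (f w)) i z = wdbar f i z / f z"
proof -
  have d: "((\<lambda>w. Ln (f w)) has_derivative (\<lambda>v. inverse (f z) * frechet_derivative f (at z) v)) (at z)"
    using has_derivative_compose[OF has_frechet_derivative[OF assms(1)]
        has_field_derivative_imp_has_derivative[OF has_field_derivative_Ln[OF assms(2)]]]
    by (simp add: o_def)
  have "f z \<noteq> 0" using assms(2) by auto
  then show "(\<lambda>w. Ln (f w)) differentiable (at z)"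
    and "wd (\<lambda>w. Ln (f w)) i z = wd f i z / f z"
    and "wdbar (\<lambda>w. Ln (f w)) i z = wdbar f i z / f z"
    unfolding wd_eq_derivative[OF d] wdbar_eq_derivative[OF d]
    by (auto simp: differentiableI[OF d] wd_def wdbar_def field_simps)
qed

lemma wd_cong_open:
  assumes "g differentiable (at z)" "open S" "z \<in> S" "\<And>w. w \<in> S \<Longrightarrow> f w = g w"
  shows "f differentiable (at z)" and "wd f i z = wd g i z" and "wdbar f i z = wdbar g i z"
proof -
  have d: "(f has_derivative frechet_derivative g (at z)) (at z)"
    using has_derivative_transform_within_open[OF has_frechet_derivative[OF assms(1)] assms(2,3)] assms(4)
    by simp
  then show "f differentiable (at z)" "wd f i z = wd g i z" "wdbar f i z = wdbar g i z"
    unfolding wd_eq_derivative[OF d] wdbar_eq_derivative[OF d]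
    by (auto simp: differentiableI wd_def wdbar_def)
qed

section \<open>Holomorphic functions of several variables\<close>

definition cdifferentiable_on :: "(complex^'m) set \<Rightarrow> (complex^'m \<Rightarrow> complex) \<Rightarrow> bool" where
  "cdifferentiable_on U f \<longleftrightarrow>
     (\<forall>z\<in>U. \<exists>f'. (f has_derivative f') (at z) \<and> (\<forall>v. f' (\<i> *s v) = \<i> * f' v))"

lemma holo_on_iff_components: "holo_on U F \<longleftrightarrow> (\<forall>a. cdifferentiable_on U (\<lambda>w. F w $ a))"
  by (simp add: holo_on_def cdifferentiable_on_def)

lemma complex_linear_expansion:
  fixes L :: "complex^'m \<Rightarrow> complex"
  assumes "bounded_linear L" "\<And>v. L (\<i> *s v) = \<i> * L v"
  shows "L v = (\<Sum>k\<in>UNIV. v $ k * L (axis k 1))"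
proof -
  interpret bounded_linear L by fact
  have "L (c *s u) = c * L u" for c u
  proof -
    have c: "c = of_real (Re c) + \<i> * of_real (Im c)" by (simp add: complex_eq_iff)
    have "c *s u = Re c *\<^sub>R u + Im c *\<^sub>R (\<i> *s u)"
      by (subst c) (simp add: vec_eq_iff, simp add: scaleR_conv_of_real algebra_simps)
    then have "L (c *s u) = Re c *\<^sub>R L u + Im c *\<^sub>R (\<i> * L u)"
      by (simp add: add scale assms(2))
    also have "\<dots> = c * L u" by (subst (3) c) (simp add: scaleR_conv_of_real algebra_simps)
    finally show ?thesis .
  qed
  then show ?thesis
    using sum[of "\<lambda>k. v $ k *s axis k 1" UNIV] by (simp add: basis_expansion)
qed

lemma wd_linear_form:
  assumes "(f has_derivative (\<lambda>v. \<Sum>k\<in>UNIV. v $ k * c k)) (at z)"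
  shows "wd f i z = c i" and "wdbar f i z = 0"
  unfolding wd_eq_derivative[OF assms] wdbar_eq_derivative[OF assms]
  by (simp_all add: axis_def if_distrib[of "\<lambda>x. x * _"] cong: if_cong)

lemma cdifferentiable_onD:
  assumes "cdifferentiable_on U f" "z \<in> U"
  shows "(f has_derivative (\<lambda>v. \<Sum>k\<in>UNIV. v $ k * wd f k z)) (at z)"
proof -
  obtain L where L: "(f has_derivative L) (at z)" "\<And>v. L (\<i> *s v) = \<i> * L v"
    using assms unfolding cdifferentiable_on_def by blast
  have axis_i: "axis k \<i> = \<i> *s (axis k 1 :: complex^'m)" for k by (simp add: vec_eq_iff axis_def)
  have "wd f k z = L (axis k 1)" for k
    unfolding wd_eq_derivative[OF L(1)] axis_i L(2) by simp
  then show ?thesis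
    using L complex_linear_expansion[OF has_derivative_bounded_linear[OF L(1)]]
    by (metis (no_types, lifting) ext)
qed

lemma cdifferentiable_on_differentiable:
  "cdifferentiable_on U f \<Longrightarrow> z \<in> U \<Longrightarrow> f differentiable (at z)"
  using cdifferentiable_onD differentiableI by blast

lemma cdifferentiable_on_wdbar: "cdifferentiable_on U f \<Longrightarrow> z \<in> U \<Longrightarrow> wdbar f i z = 0"
  using cdifferentiable_onD[THEN wd_linear_form(2)] by blast

lemma cdifferentiable_on_continuous_on: "cdifferentiable_on U f \<Longrightarrow> continuous_on U f"
  by (meson cdifferentiable_on_differentiable continuous_at_imp_continuous_on
      differentiable_imp_continuous_within)

lemma axis_zero [simp]: "axis i 0 = 0"
  by (simp add: vec_eq_iff axis_def)

lemma norm_axis: "norm (axis i c :: 'a::real_normed_vector^'n) = norm c"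
proof -
  have "(\<Sum>j\<in>UNIV. (norm (axis i c $ j))\<^sup>2) = (norm c)\<^sup>2"
    by (simp add: axis_def if_distrib[of "\<lambda>x. (norm x)\<^sup>2"] cong: if_cong)
  then show ?thesis by (simp add: norm_vec_def L2_set_def)
qed

lemma bounded_linear_axis: "bounded_linear (axis i :: 'a::real_normed_vector \<Rightarrow> 'a^'n)"
  by (rule bounded_linear_intro[where K=1]) (simp_all only: norm_axis, simp_all add: vec_eq_iff axis_def)

lemma axis_translate_in_ball:
  fixes w :: "'a::real_normed_vector^'n"
  assumes "w \<in> ball z0 r" "norm c \<le> r"
  shows "w + axis i c \<in> ball z0 (2 * r)"
proof -
  have "dist z0 (w + axis i c) \<le> dist z0 w + norm (axis i c)"
    by (metis dist_norm dist_triangle2 add_diff_cancel_left' norm_minus_commute)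
  then show ?thesis using assms by (simp add: norm_axis)
qed

lemma has_field_derivative_partial:
  assumes "cdifferentiable_on U f" "w + axis i c \<in> U"
  shows "((\<lambda>\<zeta>. f (w + axis i \<zeta>)) has_field_derivative wd f i (w + axis i c)) (at c)"
proof -
  have "((\<lambda>\<zeta>. w + axis i \<zeta>) has_derivative axis i) (at c)"
    using has_derivative_add[OF has_derivative_const
        bounded_linear.has_derivative[OF bounded_linear_axis has_derivative_ident]]
    by simp
  from has_derivative_compose[OF this cdifferentiable_onD[OF assms]]
  have "((\<lambda>\<zeta>. f (w + axis i \<zeta>)) has_derivative
      (\<lambda>h. \<Sum>k\<in>UNIV. axis i h $ k * wd f k (w + axis i c))) (at c)"
    by (simp add: o_def)
  moreover have "(\<lambda>h. \<Sum>k\<in>UNIV. axis i h $ k * wd f k (w + axis i c)) = (*) (wd f i (w + axis i c))"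
    by (simp add: fun_eq_iff axis_def if_distrib[of "\<lambda>x. x * _"] mult.commute cong: if_cong)
  ultimately show ?thesis
    by (simp add: has_field_derivative_def)
qed

lemma wd_eq_circle_integral:
  assumes f: "cdifferentiable_on U f" and r: "r > 0"
    and disc: "\<And>\<zeta>. cmod \<zeta> \<le> r \<Longrightarrow> w + axis i \<zeta> \<in> U"
  shows "wd f i w = integral {0..1} (\<lambda>t. f (w + axis i (circlepath 0 r t)) / circlepath 0 r t)"
proof -
  define g where "g \<zeta> = f (w + axis i \<zeta>)" for \<zeta>
  have g': "(g has_field_derivative wd f i (w + axis i \<zeta>)) (at \<zeta>)" if "cmod \<zeta> \<le> r" for \<zeta>
    unfolding g_def by (rule has_field_derivative_partial[OF f disc[OF that]])
  have "continuous_on (cball 0 r) g"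
    using g' by (intro continuous_at_imp_continuous_on ballI DERIV_isCont) auto
  moreover have "g holomorphic_on ball 0 r"
    unfolding holomorphic_on_open[OF open_ball] by (meson g' less_imp_le mem_ball_0)
  ultimately have "((\<lambda>u. g u / (u - 0) ^ Suc 1) has_contour_integral
      (2 * pi * \<i> / fact 1 * (deriv ^^ 1) g 0)) (circlepath 0 r)"
    using r by (intro Cauchy_has_contour_integral_higher_derivative_circlepath) auto
  moreover have "deriv g 0 = wd f i w"
    using DERIV_imp_deriv[OF g'[of 0]] r by simp
  ultimately have "((\<lambda>t. g (circlepath 0 r t) / (circlepath 0 r t)\<^sup>2
      * vector_derivative (circlepath 0 r) (at t within {0..1})) has_integral 2 * pi * \<i> * wd f i w) {0..1}"
    by (simp add: has_contour_integral_def power2_eq_square)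
  moreover have "g (circlepath 0 r t) / (circlepath 0 r t)\<^sup>2
      * vector_derivative (circlepath 0 r) (at t within {0..1})
      = 2 * pi * \<i> * (g (circlepath 0 r t) / circlepath 0 r t)" if "t \<in> {0..1}" for t
    using that r
    by (simp add: vector_derivative_circlepath01) (simp add: circlepath power2_eq_square field_simps)
  ultimately have "((\<lambda>t. 2 * pi * \<i> * (g (circlepath 0 r t) / circlepath 0 r t))
      has_integral 2 * pi * \<i> * wd f i w) {0..1}"
    using has_integral_cong by (metis (no_types, lifting))
  then have "((\<lambda>t. g (circlepath 0 r t) / circlepath 0 r t) has_integral wd f i w) {0..1}"
    by (subst (asm) has_integral_mult_right_iff) auto
  then show ?thesis
    unfolding g_def by (rule integral_unique[symmetric])
qed

lemma continuous_on_circle_integrand: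
  assumes F: "continuous_on U F" and r: "r > 0" "ball z0 (2 * r) \<subseteq> U"
  shows "continuous_on (ball z0 r \<times> cbox 0 1)
    (\<lambda>x. F (fst x + axis i (circlepath 0 r (snd x))) / circlepath 0 r (snd x))"
proof -
  have "(\<lambda>x. fst x + axis i (circlepath 0 r (snd x))) ` (ball z0 r \<times> cbox 0 1) \<subseteq> U"
    using r axis_translate_in_ball by (fastforce simp: circlepath norm_mult)
  moreover have "continuous_on (ball z0 r \<times> cbox 0 1) (\<lambda>x. fst x + axis i (circlepath 0 r (snd x)))"
    by (intro continuous_intros bounded_linear.continuous_on[OF bounded_linear_axis])
      (auto simp: circlepath intro!: continuous_intros)
  ultimately show ?thesis
    using r by (intro continuous_on_divide continuous_on_compose2[OF F])
      (auto simp: circlepath intro!: continuous_intros)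
qed

lemma open_contains_double_ball:
  assumes "open U" "z0 \<in> U"
  obtains r where "r > 0" "ball z0 (2 * r) \<subseteq> U"
proof -
  obtain e where "e > 0" "ball z0 e \<subseteq> U" using assms open_contains_ball by blast
  then show ?thesis using that[of "e / 2"] by simp
qed

lemma circle_in_domain:
  assumes "ball z0 (2 * r) \<subseteq> U" "w \<in> ball z0 r" "cmod \<zeta> \<le> r"
  shows "w + axis i \<zeta> \<in> U"
  using assms axis_translate_in_ball by blast

lemma continuous_on_wd:
  assumes f: "cdifferentiable_on U f" and U: "open U"
  shows "continuous_on U (wd f i)"
proof (rule continuous_at_imp_continuous_on, rule ballI)
  fix z0 assume "z0 \<in> U"
  then obtain r where r: "r > 0" "ball z0 (2 * r) \<subseteq> U"
    using U open_contains_double_ball by blast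
  have "continuous_on (ball z0 r)
      (\<lambda>w. integral (cbox 0 1) (\<lambda>t. f (w + axis i (circlepath 0 r t)) / circlepath 0 r t))"
    using continuous_on_circle_integrand[OF cdifferentiable_on_continuous_on[OF f] r]
    by (intro integral_continuous_on_param) (simp add: case_prod_beta')
  then have "continuous_on (ball z0 r) (wd f i)"
    by (rule continuous_on_eq)
      (use wd_eq_circle_integral[OF f r(1)] circle_in_domain[OF r(2)] in \<open>simp add: cbox_interval\<close>)
  then show "isCont (wd f i) z0"
    using r(1) by (simp add: continuous_on_eq_continuous_at)
qed

definition dot_blinfun :: "complex^'m \<Rightarrow> ((complex^'m) \<Rightarrow>\<^sub>L complex)" where
  "dot_blinfun a = Blinfun (\<lambda>v. \<Sum>k\<in>UNIV. v $ k * a $ k)"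

lemma dot_blinfun_apply:
  fixes a :: "complex^'m"
  shows "blinfun_apply (dot_blinfun a) = (\<lambda>v. \<Sum>k\<in>UNIV. v $ k * a $ k)"
proof -
  have "bounded_linear (\<lambda>v::complex^'m. \<Sum>k\<in>UNIV. v $ k * a $ k)"
    by (intro bounded_linear_sum bounded_linear_compose[OF bounded_linear_mult_left bounded_linear_vec_nth])
  then show ?thesis unfolding dot_blinfun_def by (simp add: bounded_linear_Blinfun_apply fun_eq_iff)
qed

lemma bounded_linear_dot_blinfun: "bounded_linear (dot_blinfun :: complex^'m \<Rightarrow> _)"
proof (rule bounded_linear_intro[where K="real CARD('m)"])
  fix a b :: "complex^'m" and r :: real
  show "dot_blinfun (a + b) = dot_blinfun a + dot_blinfun b"
    by (rule blinfun_eqI) (simp add: dot_blinfun_apply sum.distrib distrib_left plus_blinfun.rep_eq)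
  show "dot_blinfun (r *\<^sub>R a) = r *\<^sub>R dot_blinfun a"
    by (rule blinfun_eqI) (simp add: dot_blinfun_apply scaleR_blinfun.rep_eq,
        simp add: scaleR_conv_of_real sum_distrib_left algebra_simps)
  show "norm (dot_blinfun a) \<le> norm a * real CARD('m)"
  proof (rule norm_blinfun_bound)
    fix v :: "complex^'m"
    have "norm (\<Sum>k\<in>UNIV. v $ k * a $ k) \<le> (\<Sum>k\<in>(UNIV::'m set). norm v * norm a)"
      by (intro sum_norm_le, unfold norm_mult, intro mult_mono Finite_Cartesian_Product.norm_nth_le) auto
    then show "norm (blinfun_apply (dot_blinfun a) v) \<le> norm a * real CARD('m) * norm v"
      by (simp add: dot_blinfun_apply mult_ac)
  qed simp
qed

lemma has_derivative_circle_integral: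
  assumes f: "cdifferentiable_on U f" "open U" and r: "r > 0" "ball z0 (2 * r) \<subseteq> U"
  shows "((\<lambda>w. integral {0..1} (\<lambda>t. f (w + axis i (circlepath 0 r t)) / circlepath 0 r t))
    has_derivative (\<lambda>v. \<Sum>k\<in>UNIV. v $ k *
      integral {0..1} (\<lambda>t. wd f k (z0 + axis i (circlepath 0 r t)) / circlepath 0 r t))) (at z0)"
proof -
  define h where "h w = (\<lambda>t. f (w + axis i (circlepath 0 r t)) / circlepath 0 r t)" for w
  define G where "G w t = (\<chi> k. wd f k (w + axis i (circlepath 0 r t)) / circlepath 0 r t)" for w t
  have z0: "z0 \<in> ball z0 r" using r by simp
  have h': "((\<lambda>w. h w t) has_derivative blinfun_apply (dot_blinfun (G w t))) (at w within ball z0 r)"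
    if w: "w \<in> ball z0 r" for w t
  proof -
    have "w + axis i (circlepath 0 r t) \<in> U"
      using circle_in_domain[OF r(2) w] r(1) by (simp add: circlepath norm_mult)
    from has_derivative_compose[OF has_derivative_add_const[OF has_derivative_ident]
        cdifferentiable_onD[OF f(1) this]]
    have "((\<lambda>w. h w t) has_derivative
        (\<lambda>v. (\<Sum>k\<in>UNIV. v $ k * wd f k (w + axis i (circlepath 0 r t))) * inverse (circlepath 0 r t))) (at w)"
      unfolding h_def divide_inverse o_def by (rule has_derivative_mult_left)
    moreover have "blinfun_apply (dot_blinfun (G w t)) =
        (\<lambda>v. (\<Sum>k\<in>UNIV. v $ k * wd f k (w + axis i (circlepath 0 r t))) * inverse (circlepath 0 r t))"
      by (simp add: dot_blinfun_apply G_def sum_distrib_right divide_inverse mult.assoc)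
    ultimately show ?thesis
      by (simp add: has_derivative_at_withinI)
  qed
  have cont_G: "continuous_on (ball z0 r \<times> cbox 0 1) (\<lambda>(w, t). G w t)"
    unfolding G_def case_prod_beta'
    by (intro continuous_on_vec_lambda continuous_on_circle_integrand[OF continuous_on_wd[OF f] r])
  have cont_h: "continuous_on (ball z0 r \<times> cbox 0 1) (\<lambda>(w, t). h w t)"
    unfolding h_def case_prod_beta'
    by (rule continuous_on_circle_integrand[OF cdifferentiable_on_continuous_on[OF f(1)] r])
  have "continuous_on (cbox 0 1) (\<lambda>t. G z0 t)"
    using z0 by (intro continuous_on_compose_Pair[OF cont_G continuous_on_const continuous_on_id]) auto
  then have int_G: "G z0 integrable_on cbox 0 1"
    by (rule integrable_continuous)
  have "((\<lambda>w. integral (cbox 0 1) (h w)) has_derivative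
      blinfun_apply (integral (cbox 0 1) (\<lambda>t. dot_blinfun (G z0 t)))) (at z0 within ball z0 r)"
  proof (rule leibniz_rule[OF h' _ _ z0 convex_ball])
    show "h w integrable_on cbox 0 1" if "w \<in> ball z0 r" for w
      using that
      by (intro integrable_continuous continuous_on_compose_Pair[OF cont_h continuous_on_const continuous_on_id])
        auto
    show "continuous_on (ball z0 r \<times> cbox 0 1) (\<lambda>(w, t). dot_blinfun (G w t))"
      using bounded_linear.continuous_on[OF bounded_linear_dot_blinfun cont_G] by (simp add: case_prod_beta')
  qed
  moreover have "integral (cbox 0 1) (\<lambda>t. dot_blinfun (G z0 t)) = dot_blinfun (integral (cbox 0 1) (G z0))"
    using integral_linear[OF int_G bounded_linear_dot_blinfun] by (simp add: o_def)
  moreover have "integral (cbox 0 1) (G z0) $ k = integral (cbox 0 1) (\<lambda>t. G z0 t $ k)" for k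
    using integral_linear[OF int_G bounded_linear_vec_nth[of k]] by (simp add: o_def)
  ultimately show ?thesis
    by (simp add: at_within_open[OF z0 open_ball] dot_blinfun_apply G_def h_def cbox_interval)
qed

lemma has_derivative_wd:
  assumes f: "cdifferentiable_on U f" "open U" and r: "r > 0" "ball z0 (2 * r) \<subseteq> U"
  shows "(wd f i has_derivative (\<lambda>v. \<Sum>k\<in>UNIV. v $ k *
      integral {0..1} (\<lambda>t. wd f k (z0 + axis i (circlepath 0 r t)) / circlepath 0 r t))) (at z0)"
proof (rule has_derivative_transform_within_open[OF has_derivative_circle_integral[OF f r] open_ball])
  show "z0 \<in> ball z0 r" using r by simp
  show "integral {0..1} (\<lambda>t. f (w + axis i (circlepath 0 r t)) / circlepath 0 r t) = wd f i w"
    if "w \<in> ball z0 r" for w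
    using wd_eq_circle_integral[OF f(1) r(1)] circle_in_domain[OF r(2) that] by simp
qed

lemma cdifferentiable_on_wd:
  assumes "cdifferentiable_on U f" "open U"
  shows "cdifferentiable_on U (wd f i)"
  unfolding cdifferentiable_on_def
proof
  fix z0 assume "z0 \<in> U"
  then obtain r where "r > 0" "ball z0 (2 * r) \<subseteq> U"
    using assms(2) open_contains_double_ball by blast
  from has_derivative_wd[OF assms this, of i]
  show "\<exists>f'. (wd f i has_derivative f') (at z0) \<and> (\<forall>v. f' (\<i> *s v) = \<i> * f' v)"
    by (intro exI conjI) (auto simp: sum_distrib_left mult.assoc)
qed

lemma wd_wd_commute:
  assumes f: "cdifferentiable_on U f" "open U" and z: "z \<in> U"
  shows "wd (wd f i) j z = wd (wd f j) i z"
proof -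
  obtain r where r: "r > 0" "ball z (2 * r) \<subseteq> U"
    using open_contains_double_ball[OF f(2) z] .
  have "wd (wd f i) j z = integral {0..1} (\<lambda>t. wd f j (z + axis i (circlepath 0 r t)) / circlepath 0 r t)"
    by (rule wd_linear_form(1)[OF has_derivative_wd[OF f r]])
  also have "\<dots> = wd (wd f j) i z"
    using r by (intro wd_eq_circle_integral[OF cdifferentiable_on_wd[OF f], symmetric] circle_in_domain) auto
  finally show ?thesis .
qed

section \<open>Vector-valued maps and the pairing\<close>

definition vwdbar :: "(complex^'m \<Rightarrow> complex^'k) \<Rightarrow> 'm \<Rightarrow> complex^'m \<Rightarrow> complex^'k" where
  "vwdbar F i z = (\<chi> a. wdbar (\<lambda>w. F w $ a) i z)"

definition vdifferentiable_at :: "(complex^'m \<Rightarrow> complex^'k) \<Rightarrow> complex^'m \<Rightarrow> bool" where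
  "vdifferentiable_at F z \<longleftrightarrow> (\<forall>a. (\<lambda>w. F w $ a) differentiable (at z))"

lemma holo_on_vdifferentiable_at: "holo_on U F \<Longrightarrow> z \<in> U \<Longrightarrow> vdifferentiable_at F z"
  using cdifferentiable_on_differentiable by (auto simp: holo_on_iff_components vdifferentiable_at_def)

lemma holo_on_vwdbar: "holo_on U F \<Longrightarrow> z \<in> U \<Longrightarrow> vwdbar F i z = 0"
  unfolding holo_on_iff_components vwdbar_def vec_eq_iff by (simp add: cdifferentiable_on_wdbar[of U])

lemma holo_on_vwd: "holo_on U F \<Longrightarrow> open U \<Longrightarrow> holo_on U (vwd F i)"
  by (simp add: holo_on_iff_components vwd_def cdifferentiable_on_wd)

lemma vwd_vwd_commute:
  "holo_on U F \<Longrightarrow> open U \<Longrightarrow> z \<in> U \<Longrightarrow> vwd (vwd F i) j z = vwd (vwd F j) i z"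
  unfolding holo_on_iff_components vwd_def vec_eq_iff by (simp add: wd_wd_commute[of U])

lemma vwd_add_scale:
  assumes X: "vdifferentiable_at X z" and Y: "vdifferentiable_at Y z" and c: "c differentiable (at z)"
  shows "vdifferentiable_at (\<lambda>w. X w + c w *s Y w) z"
    and "vwd (\<lambda>w. X w + c w *s Y w) i z = vwd X i z + wd c i z *s Y z + c z *s vwd Y i z"
    and "vwdbar (\<lambda>w. X w + c w *s Y w) i z = vwdbar X i z + wdbar c i z *s Y z + c z *s vwdbar Y i z"
proof -
  have dX: "(\<lambda>w. X w $ a) differentiable (at z)" and dY: "(\<lambda>w. Y w $ a) differentiable (at z)" for a
    using X Y by (auto simp: vdifferentiable_at_def)
  have dcY: "(\<lambda>w. c w * Y w $ a) differentiable (at z)" for a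
    using c dY by simp
  show "vdifferentiable_at (\<lambda>w. X w + c w *s Y w) z"
    using dX dcY by (simp add: vdifferentiable_at_def)
  show "vwd (\<lambda>w. X w + c w *s Y w) i z = vwd X i z + wd c i z *s Y z + c z *s vwd Y i z"
    by (simp add: vwd_def vec_eq_iff wd_add(1)[OF dX dcY] wd_mult(1)[OF c dY] algebra_simps)
  show "vwdbar (\<lambda>w. X w + c w *s Y w) i z = vwdbar X i z + wdbar c i z *s Y z + c z *s vwdbar Y i z"
    by (simp add: vwdbar_def vec_eq_iff wd_add(2)[OF dX dcY] wd_mult(2)[OF c dY] algebra_simps)
qed

lemma vwd_vcnj:
  assumes "vdifferentiable_at X z"
  shows "vdifferentiable_at (\<lambda>w. vcnj (X w)) z"
    and "vwd (\<lambda>w. vcnj (X w)) i z = vcnj (vwdbar X i z)"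
    and "vwdbar (\<lambda>w. vcnj (X w)) i z = vcnj (vwd X i z)"
  using assms
  by (simp_all add: vdifferentiable_at_def vwd_def vwdbar_def vcnj_def vec_eq_iff wd_cnj differentiable_cnj)

lemma pair_eq_sum:
  "pair n Qm x y = (\<i> ^ n * (-1) ^ (n * (n - 1) div 2)) * (\<Sum>a\<in>UNIV. \<Sum>b\<in>UNIV. x $ a * Qm $ a $ b * y $ b)"
  by (simp add: pair_def Qform_def)

lemma pair_add_left: "pair n Qm (x + y) u = pair n Qm x u + pair n Qm y u"
  by (simp add: pair_eq_sum sum.distrib distrib_left distrib_right)

lemma pair_add_right: "pair n Qm u (x + y) = pair n Qm u x + pair n Qm u y"
  by (simp add: pair_eq_sum sum.distrib distrib_left distrib_right)

lemma pair_diff_left: "pair n Qm (x - y) u = pair n Qm x u - pair n Qm y u"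
  by (simp add: pair_eq_sum sum_subtractf left_diff_distrib right_diff_distrib)

lemma pair_scale_left: "pair n Qm (c *s x) u = c * pair n Qm x u"
  by (simp add: pair_eq_sum sum_distrib_left mult.assoc mult.left_commute)

lemma pair_scale_right: "pair n Qm u (c *s x) = c * pair n Qm u x"
  by (simp add: pair_eq_sum sum_distrib_left mult.assoc mult.left_commute)

lemma pair_zero_left: "pair n Qm 0 u = 0"
  by (simp add: pair_eq_sum)

lemma pair_zero_right: "pair n Qm u 0 = 0"
  by (simp add: pair_eq_sum)

lemma pair_sum_left: "finite S \<Longrightarrow> pair n Qm (\<Sum>k\<in>S. x k) u = (\<Sum>k\<in>S. pair n Qm (x k) u)"
  by (induction S rule: finite_induct) (simp_all add: pair_zero_left pair_add_left)

lemma wd_pair: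
  assumes X: "vdifferentiable_at X z" and Y: "vdifferentiable_at Y z"
  shows "(\<lambda>w. pair n Qm (X w) (Y w)) differentiable (at z)"
    and "wd (\<lambda>w. pair n Qm (X w) (Y w)) i z = pair n Qm (vwd X i z) (Y z) + pair n Qm (X z) (vwd Y i z)"
    and "wdbar (\<lambda>w. pair n Qm (X w) (Y w)) i z
           = pair n Qm (vwdbar X i z) (Y z) + pair n Qm (X z) (vwdbar Y i z)"
proof -
  have dX: "(\<lambda>w. X w $ a) differentiable (at z)" and dY: "(\<lambda>w. Y w $ a) differentiable (at z)" for a
    using X Y by (auto simp: vdifferentiable_at_def)
  have dXQ: "(\<lambda>w. X w $ a * Qm $ a $ b) differentiable (at z)" for a b
    using dX by simp
  have dt: "(\<lambda>w. X w $ a * Qm $ a $ b * Y w $ b) differentiable (at z)" for a b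
    using dXQ dY by simp
  have ds: "(\<lambda>w. \<Sum>b\<in>UNIV. X w $ a * Qm $ a $ b * Y w $ b) differentiable (at z)" for a
    using dt by simp
  have dss: "(\<lambda>w. \<Sum>a\<in>UNIV. \<Sum>b\<in>UNIV. X w $ a * Qm $ a $ b * Y w $ b) differentiable (at z)"
    using ds by simp
  show "(\<lambda>w. pair n Qm (X w) (Y w)) differentiable (at z)"
    unfolding pair_eq_sum using dss by simp
  have const: "wd (\<lambda>w. c * f w) i z = c * wd f i z" "wdbar (\<lambda>w. c * f w) i z = c * wdbar f i z"
    if "f differentiable (at z)" for c f
    using wd_mult[OF differentiable_const that, of c i] by (simp_all add: wd_const wdbar_const)
  have "wd (\<lambda>w. X w $ a * Qm $ a $ b * Y w $ b) i z
      = X z $ a * Qm $ a $ b * wd (\<lambda>w. Y w $ b) i z + wd (\<lambda>w. X w $ a) i z * Qm $ a $ b * Y z $ b"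
    and "wdbar (\<lambda>w. X w $ a * Qm $ a $ b * Y w $ b) i z
      = X z $ a * Qm $ a $ b * wdbar (\<lambda>w. Y w $ b) i z + wdbar (\<lambda>w. X w $ a) i z * Qm $ a $ b * Y z $ b"
    for a b
    by (simp_all add: wd_mult[OF dXQ dY] wd_mult[OF dX differentiable_const] wd_const wdbar_const)
  then show "wd (\<lambda>w. pair n Qm (X w) (Y w)) i z = pair n Qm (vwd X i z) (Y z) + pair n Qm (X z) (vwd Y i z)"
    and "wdbar (\<lambda>w. pair n Qm (X w) (Y w)) i z
      = pair n Qm (vwdbar X i z) (Y z) + pair n Qm (X z) (vwdbar Y i z)"
    unfolding pair_eq_sum
    by (simp_all add: const[OF dss] wd_sum[OF _ ds] wd_sum[OF _ dt] vwd_def vwdbar_def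
        sum.distrib distrib_left)
qed

lemma wd_pair_cnj:
  assumes X: "vdifferentiable_at X z" and Y: "vdifferentiable_at Y z"
  shows "(\<lambda>w. pair n Qm (X w) (vcnj (Y w))) differentiable (at z)"
    and "wd (\<lambda>w. pair n Qm (X w) (vcnj (Y w))) i z
           = pair n Qm (vwd X i z) (vcnj (Y z)) + pair n Qm (X z) (vcnj (vwdbar Y i z))"
    and "wdbar (\<lambda>w. pair n Qm (X w) (vcnj (Y w))) i z
           = pair n Qm (vwdbar X i z) (vcnj (Y z)) + pair n Qm (X z) (vcnj (vwd Y i z))"
  using wd_pair[OF X vwd_vcnj(1)[OF Y]] vwd_vcnj(2,3)[OF Y] by simp_all

lemma vcnj_add: "vcnj (x + y) = vcnj x + vcnj y"
  by (simp add: vcnj_def vec_eq_iff)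

lemma vcnj_scale: "vcnj (c *s x) = cnj c *s vcnj x"
  by (simp add: vcnj_def vec_eq_iff)

lemma vcnj_zero [simp]: "vcnj 0 = 0"
  by (simp add: vcnj_def vec_eq_iff)

lemma wd_pair_cnj_holo:
  assumes "vdifferentiable_at X z" "holo_on U Y" "z \<in> U"
  shows "(\<lambda>w. pair n Qm (X w) (vcnj (Y w))) differentiable (at z)"
    and "wd (\<lambda>w. pair n Qm (X w) (vcnj (Y w))) i z = pair n Qm (vwd X i z) (vcnj (Y z))"
  using wd_pair_cnj(1,2)[OF assms(1) holo_on_vdifferentiable_at[OF assms(2,3)]]
    holo_on_vwdbar[OF assms(2,3)] by (simp_all add: pair_zero_right)

lemma matrix_mul_matrix_inv: "invertible A \<Longrightarrow> A ** matrix_inv A = mat 1"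
  using someI_ex[of "\<lambda>A'. A ** A' = mat 1 \<and> A' ** A = mat 1"] by (auto simp: invertible_def matrix_inv_def)

lemma sum_matrix_inv_transpose:
  fixes W :: "'a::field^'m^'m"
  assumes "invertible (transpose W)"
  shows "(\<Sum>k\<in>UNIV. (\<Sum>q\<in>UNIV. matrix_inv (transpose W) $ k $ q * d q) * W $ k $ l) = d l"
proof -
  have inv: "(\<Sum>k\<in>UNIV. W $ k $ l * matrix_inv (transpose W) $ k $ q) = (if l = q then 1 else 0)" for q
  proof -
    have "(transpose W ** matrix_inv (transpose W)) $ l $ q = mat 1 $ l $ q"
      by (simp add: matrix_mul_matrix_inv[OF assms])
    then show ?thesis
      by (simp add: matrix_matrix_mult_def transpose_def mat_def)
  qed
  have "(\<Sum>k\<in>UNIV. (\<Sum>q\<in>UNIV. matrix_inv (transpose W) $ k $ q * d q) * W $ k $ l)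
      = (\<Sum>q\<in>UNIV. d q * (\<Sum>k\<in>UNIV. W $ k $ l * matrix_inv (transpose W) $ k $ q))"
    by (simp add: sum_distrib_left sum_distrib_right mult_ac) (rule sum.swap)
  also have "\<dots> = (\<Sum>q\<in>UNIV. if q = l then d q else 0)"
    by (rule sum.cong) (auto simp: inv)
  also have "\<dots> = d l"
    by simp
  finally show ?thesis .
qed

lemma invertible_transpose_if_positive_definite:
  fixes W :: "complex^'m^'m"
  assumes "\<And>v. v \<noteq> 0 \<Longrightarrow> Re (\<Sum>i\<in>UNIV. \<Sum>j\<in>UNIV. W $ i $ j * v $ i * cnj (v $ j)) > 0"
  shows "invertible (transpose W)"
proof -
  have "x = 0" if x: "transpose W *v x = 0" for x
  proof (rule ccontr)
    assume "x \<noteq> 0"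
    have "(\<Sum>i\<in>UNIV. W $ i $ j * x $ i) = 0" for j
      using arg_cong[OF x, of "\<lambda>v. v $ j"] by (simp add: matrix_vector_mult_def transpose_def)
    then have "(\<Sum>i\<in>UNIV. \<Sum>j\<in>UNIV. W $ i $ j * x $ i * cnj (x $ j)) = 0"
      by (subst sum.swap) (simp add: sum_distrib_right[symmetric])
    then show False using assms[OF \<open>x \<noteq> 0\<close>] by simp
  qed
  then show ?thesis
    using matrix_left_invertible_ker invertible_left_inverse by blast
qed

section \<open>The Weil--Petersson geometry of a holomorphic section\<close>

locale hodge_section =
  fixes n :: nat and Qm :: "complex^'k^'k" and U :: "(complex^'m) set"
    and \<Omega> :: "complex^'m \<Rightarrow> complex^'k"
  assumes open_U: "open U"
    and holo: "holo_on U \<Omega>"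
    and normsq_Re_pos: "\<And>z. z \<in> U \<Longrightarrow> Re (normsq n Qm \<Omega> z) > 0"
    and wp_invertible: "\<And>z. z \<in> U \<Longrightarrow> invertible (transpose (wp n Qm \<Omega> z))"
begin

abbreviation "N \<equiv> normsq n Qm \<Omega>"
abbreviation "K \<equiv> Kc n Qm \<Omega>"
abbreviation "D \<equiv> D1 n Qm \<Omega>"
abbreviation "g \<equiv> wp n Qm \<Omega>"
abbreviation "\<Gamma> \<equiv> Chr n Qm \<Omega>"

lemma holo_vwd: "holo_on U (vwd \<Omega> i)"
  using holo open_U by (rule holo_on_vwd)

lemma normsq_notin_nonpos_Reals: "z \<in> U \<Longrightarrow> N z \<notin> \<real>\<^sub>\<le>\<^sub>0" and normsq_nonzero: "z \<in> U \<Longrightarrow> N z \<noteq> 0"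
  using normsq_Re_pos[of z] by (auto simp: nonpos_Reals_def)

lemma normsq_fun: "N = (\<lambda>w. pair n Qm (\<Omega> w) (vcnj (\<Omega> w)))"
  by (simp add: fun_eq_iff normsq_def)

lemma differentiable_normsq: "z \<in> U \<Longrightarrow> N differentiable (at z)"
  and wd_normsq: "z \<in> U \<Longrightarrow> wd N i z = pair n Qm (vwd \<Omega> i z) (vcnj (\<Omega> z))"
  and wdbar_normsq: "z \<in> U \<Longrightarrow> wdbar N i z = pair n Qm (\<Omega> z) (vcnj (vwd \<Omega> i z))"
  using wd_pair_cnj[OF holo_on_vdifferentiable_at[OF holo] holo_on_vdifferentiable_at[OF holo]]
  by (simp_all add: normsq_fun holo_on_vwdbar[OF holo] pair_zero_left pair_zero_right)

lemma Kc_eq: "z \<in> U \<Longrightarrow> K i z = - (pair n Qm (vwd \<Omega> i z) (vcnj (\<Omega> z)) / N z)"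
  unfolding Kc_def using wd_Ln(2)[OF differentiable_normsq normsq_notin_nonpos_Reals] by (simp add: wd_normsq)

lemma
  assumes z: "z \<in> U"
  shows differentiable_Kc: "K i differentiable (at z)"
    and wd_Kc: "wd (K i) j z = - ((pair n Qm (vwd (vwd \<Omega> i) j z) (vcnj (\<Omega> z)) * N z
        - pair n Qm (vwd \<Omega> i z) (vcnj (\<Omega> z)) * pair n Qm (vwd \<Omega> j z) (vcnj (\<Omega> z))) / (N z)\<^sup>2)"
proof -
  define A where "A w = pair n Qm (vwd \<Omega> i w) (vcnj (\<Omega> w))" for w
  note A = wd_pair_cnj_holo[OF holo_on_vdifferentiable_at[OF holo_vwd[of i] z] holo z, where n=n and Qm=Qm,
      folded A_def]
  have quotient: "(\<lambda>w. A w / N w) differentiable (at z)"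
    using A(1) differentiable_normsq[OF z] normsq_nonzero[OF z] by simp
  have "\<And>w. w \<in> U \<Longrightarrow> K i w = - (A w / N w)"
    using Kc_eq by (simp add: A_def)
  note K = wd_cong_open[OF differentiable_minus[OF quotient] open_U z this]
  show "K i differentiable (at z)"
    by (rule K(1))
  have "wd (K i) j z = - ((wd A j z * N z - A z * wd N j z) / (N z)\<^sup>2)"
    by (simp only: K(2) wd_minus[OF quotient]
        wd_divide[OF A(1) differentiable_normsq[OF z] normsq_nonzero[OF z]])
  then show "wd (K i) j z = - ((pair n Qm (vwd (vwd \<Omega> i) j z) (vcnj (\<Omega> z)) * N z
        - pair n Qm (vwd \<Omega> i z) (vcnj (\<Omega> z)) * pair n Qm (vwd \<Omega> j z) (vcnj (\<Omega> z))) / (N z)\<^sup>2)"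
    by (simp add: A(2) wd_normsq[OF z] A_def)
qed

lemma wd_Kc_commute: "z \<in> U \<Longrightarrow> wd (K i) j z = wd (K j) i z"
  by (simp add: wd_Kc vwd_vwd_commute[OF holo open_U] mult.commute)

lemma D1_fun: "D i = (\<lambda>w. vwd \<Omega> i w + K i w *s \<Omega> w)"
  by (simp add: fun_eq_iff D1_def)

lemma pair_D1_cnj_Omega:
  assumes z: "z \<in> U"
  shows "pair n Qm (D i z) (vcnj (\<Omega> z)) = 0"
  using normsq_nonzero[OF z]
  unfolding D1_def pair_add_left pair_scale_left Kc_eq[OF z] normsq_def[symmetric] by simp

lemma
  assumes z: "z \<in> U"
  shows vdifferentiable_D1: "vdifferentiable_at (D i) z"
    and vwd_D1: "vwd (D i) j z = vwd (vwd \<Omega> i) j z + wd (K i) j z *s \<Omega> z + K i z *s vwd \<Omega> j z"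
    and vwdbar_D1: "vwdbar (D i) j z = wdbar (K i) j z *s \<Omega> z"
  using vwd_add_scale[OF holo_on_vdifferentiable_at[OF holo_vwd z] holo_on_vdifferentiable_at[OF holo z]
      differentiable_Kc[OF z]]
  by (simp_all add: D1_fun holo_on_vwdbar[OF holo_vwd z] holo_on_vwdbar[OF holo z])

lemma pair_D1_cnj_D1:
  "z \<in> U \<Longrightarrow> pair n Qm (D i z) (vcnj (D q z))
     = pair n Qm (vwd \<Omega> i z) (vcnj (vwd \<Omega> q z)) + K i z * pair n Qm (\<Omega> z) (vcnj (vwd \<Omega> q z))"
  by (simp add: D1_def[of _ _ _ q] vcnj_add vcnj_scale pair_add_right pair_scale_right pair_D1_cnj_Omega)
    (simp add: D1_def pair_add_left pair_scale_left)

lemma wp_eq_pair_D1: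
  assumes z: "z \<in> U"
  shows "g z $ i $ q = - pair n Qm (D i z) (vcnj (D q z)) / N z"
proof -
  define B where "B w = pair n Qm (\<Omega> w) (vcnj (vwd \<Omega> q w))" for w
  note B = wd_pair_cnj_holo[OF holo_on_vdifferentiable_at[OF holo z] holo_vwd[of q] z, where n=n and Qm=Qm,
      folded B_def]
  have quotient: "(\<lambda>w. B w / N w) differentiable (at z)"
    using B(1) differentiable_normsq[OF z] normsq_nonzero[OF z] by simp
  have "wdbar (\<lambda>u. Ln (N u)) q w = B w / N w" if "w \<in> U" for w
    using wd_Ln(3)[OF differentiable_normsq normsq_notin_nonpos_Reals, OF that that] wdbar_normsq[OF that]
    by (simp add: B_def)
  then have "wd (\<lambda>w. wdbar (\<lambda>u. Ln (N u)) q w) i z = wd (\<lambda>w. B w / N w) i z"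
    by (rule wd_cong_open(2)[OF quotient open_U z])
  then have "g z $ i $ q = - wd (\<lambda>w. B w / N w) i z"
    by (simp add: wp_def)
  also have "\<dots> = - ((pair n Qm (vwd \<Omega> i z) (vcnj (vwd \<Omega> q z)) * N z
      - B z * pair n Qm (vwd \<Omega> i z) (vcnj (\<Omega> z))) / (N z)\<^sup>2)"
    by (simp add: wd_divide[OF B(1) differentiable_normsq[OF z] normsq_nonzero[OF z]] B(2) wd_normsq[OF z])
  also have "\<dots> = - (pair n Qm (vwd \<Omega> i z) (vcnj (vwd \<Omega> q z)) + K i z * B z) / N z"
    using normsq_nonzero[OF z] unfolding Kc_eq[OF z] by (simp add: divide_simps power2_eq_square)
  also have "\<dots> = - pair n Qm (D i z) (vcnj (D q z)) / N z"
    by (simp add: pair_D1_cnj_D1[OF z] B_def)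
  finally show ?thesis .
qed

lemma
  assumes z: "z \<in> U"
  shows differentiable_pair_D1_cnj_D1: "(\<lambda>w. pair n Qm (D i w) (vcnj (D q w))) differentiable (at z)"
    and wd_pair_D1_cnj_D1:
      "wd (\<lambda>w. pair n Qm (D i w) (vcnj (D q w))) j z = pair n Qm (vwd (D i) j z) (vcnj (D q z))"
  using wd_pair_cnj(1,2)[OF vdifferentiable_D1[OF z] vdifferentiable_D1[OF z]]
  by (simp_all add: vwdbar_D1[OF z] vcnj_scale pair_scale_right pair_D1_cnj_Omega[OF z])

text \<open>\<open>D\<^sub>jD\<^sub>i\<Omega>\<close> without its Christoffel term.\<close>

definition hodge_deriv :: "'m \<Rightarrow> 'm \<Rightarrow> complex^'m \<Rightarrow> complex^'k" where
  "hodge_deriv j i z = vwd (D i) j z + K j z *s D i z"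

lemma hodge_deriv_commute: "z \<in> U \<Longrightarrow> hodge_deriv j i z = hodge_deriv i j z"
  by (simp add: hodge_deriv_def vwd_D1 D1_def vwd_vwd_commute[OF holo open_U] wd_Kc_commute[of z i j]
      vec_eq_iff algebra_simps)

lemma pair_hodge_deriv_cnj_Omega:
  assumes z: "z \<in> U"
  shows "pair n Qm (hodge_deriv j i z) (vcnj (\<Omega> z)) = 0"
proof -
  have "wd (\<lambda>w. pair n Qm (D i w) (vcnj (\<Omega> w))) j z = wd (\<lambda>w. 0) j z"
    using pair_D1_cnj_Omega by (intro wd_cong_open(2)[OF differentiable_const open_U z]) simp
  then have "pair n Qm (vwd (D i) j z) (vcnj (\<Omega> z)) = 0"
    by (simp add: wd_pair_cnj_holo(2)[OF vdifferentiable_D1[OF z] holo z] wd_const)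
  then show ?thesis
    by (simp add: hodge_deriv_def pair_add_left pair_scale_left pair_D1_cnj_Omega[OF z])
qed

lemma wd_wp:
  assumes z: "z \<in> U"
  shows "wd (\<lambda>w. g w $ i $ q) j z = - pair n Qm (hodge_deriv j i z) (vcnj (D q z)) / N z"
proof -
  define h where "h = (\<lambda>w. pair n Qm (D i w) (vcnj (D q w)))"
  have dh: "h differentiable (at z)"
    unfolding h_def by (rule differentiable_pair_D1_cnj_D1[OF z])
  have quotient: "(\<lambda>w. - h w / N w) differentiable (at z)"
    using dh differentiable_normsq[OF z] normsq_nonzero[OF z] by simp
  have "wd (\<lambda>w. g w $ i $ q) j z = wd (\<lambda>w. - h w / N w) j z"
    using wp_eq_pair_D1 by (intro wd_cong_open(2)[OF quotient open_U z]) (simp add: h_def)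
  also have "\<dots> = - (wd h j z * N z - h z * pair n Qm (vwd \<Omega> j z) (vcnj (\<Omega> z))) / (N z)\<^sup>2"
    unfolding wd_divide[OF differentiable_minus[OF dh] differentiable_normsq[OF z] normsq_nonzero[OF z]]
      wd_minus[OF dh] wd_normsq[OF z]
    by (simp add: algebra_simps)
  also have "\<dots> = - (wd h j z + K j z * h z) / N z"
    using normsq_nonzero[OF z] unfolding Kc_eq[OF z] by (simp add: divide_simps power2_eq_square)
  also have "\<dots> = - pair n Qm (hodge_deriv j i z) (vcnj (D q z)) / N z"
    by (simp add: h_def wd_pair_D1_cnj_D1[OF z] hodge_deriv_def pair_add_left pair_scale_left)
  finally show ?thesis .
qed

lemma Chr_commute: "z \<in> U \<Longrightarrow> \<Gamma> k i j z = \<Gamma> k j i z"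
  by (simp add: Chr_def wd_wp hodge_deriv_commute)

lemma Chr_lowered: "z \<in> U \<Longrightarrow> (\<Sum>k\<in>UNIV. \<Gamma> k i j z * g z $ k $ l) = wd (\<lambda>w. g w $ i $ l) j z"
  unfolding Chr_def wpinv_def by (rule sum_matrix_inv_transpose[OF wp_invertible])

lemma D2_eq: "D2 n Qm \<Omega> j i z = hodge_deriv j i z - (\<Sum>k\<in>UNIV. \<Gamma> k i j z *s D k z)"
  by (simp add: D2_def hodge_deriv_def algebra_simps)

lemma pair_D2_cnj_Omega: "z \<in> U \<Longrightarrow> pair n Qm (D2 n Qm \<Omega> j i z) (vcnj (\<Omega> z)) = 0"
  by (simp add: D2_eq pair_diff_left pair_sum_left pair_scale_left pair_hodge_deriv_cnj_Omega
      pair_D1_cnj_Omega)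

lemma pair_D2_cnj_D1:
  assumes z: "z \<in> U"
  shows "pair n Qm (D2 n Qm \<Omega> j i z) (vcnj (D l z)) = 0"
proof -
  have "pair n Qm (D k z) (vcnj (D l z)) = - N z * g z $ k $ l" for k
    using normsq_nonzero[OF z] by (simp add: wp_eq_pair_D1[OF z])
  then have "pair n Qm (D2 n Qm \<Omega> j i z) (vcnj (D l z))
      = pair n Qm (hodge_deriv j i z) (vcnj (D l z)) + N z * (\<Sum>k\<in>UNIV. \<Gamma> k i j z * g z $ k $ l)"
    by (simp add: D2_eq pair_diff_left pair_sum_left pair_scale_left sum_distrib_left sum_negf mult_ac)
  also have "\<dots> = 0"
    using normsq_nonzero[OF z] by (simp add: Chr_lowered[OF z] wd_wp[OF z])
  finally show ?thesis .
qed

lemma D2_commute: "z \<in> U \<Longrightarrow> D2 n Qm \<Omega> j i z = D2 n Qm \<Omega> i j z"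
  by (simp add: D2_eq hodge_deriv_commute Chr_commute)

end

theorem lemma3p3:
  fixes n :: nat
    and Qm :: "complex^'k^'k"
    and U :: "(complex^'m) set"
    and \<Omega> :: "complex^'m \<Rightarrow> complex^'k"
  assumes n3: "n \<ge> 3"
    and Qreal: "\<forall>a b. Qm $ a $ b \<in> \<real>"
    and Qsym: "\<forall>a b. Qm $ b $ a = (-1) ^ n * Qm $ a $ b"
    and Qnondeg: "det Qm \<noteq> 0"
    and U_open: "open U"
    and holo: "holo_on U \<Omega>"
    and Omega_nz: "\<forall>z\<in>U. \<Omega> z \<noteq> 0"
    and HR_pos: "\<forall>z\<in>U. normsq n Qm \<Omega> z \<in> \<real> \<and> Re (normsq n Qm \<Omega> z) > 0"
    and wp_herm: "\<forall>z\<in>U. \<forall>i j. wp n Qm \<Omega> z $ j $ i = cnj (wp n Qm \<Omega> z $ i $ j)"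
    and wp_posdef: "\<forall>z\<in>U. \<forall>v. v \<noteq> 0 \<longrightarrow>
        Re (\<Sum>i\<in>UNIV. \<Sum>j\<in>UNIV. wp n Qm \<Omega> z $ i $ j * v $ i * cnj (v $ j)) > 0"
  shows "\<forall>z\<in>U. \<forall>i j l.
           pair n Qm (D2 n Qm \<Omega> j i z) (vcnj (\<Omega> z)) = 0
         \<and> pair n Qm (D2 n Qm \<Omega> j i z) (vcnj (D1 n Qm \<Omega> l z)) = 0
         \<and> D2 n Qm \<Omega> j i z = D2 n Qm \<Omega> i j z"
proof -
  \<comment> \<open>Only openness, holomorphy, \<open>Re (\<Omega>, \<Omega>\<^bsup>-\<^esup>) > 0\<close> and definiteness of the metric are needed.\<close>
  interpret hodge_section n Qm U \<Omega>
  proof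
    show "open U" by (fact U_open)
    show "holo_on U \<Omega>" by (fact holo)
    show "Re (normsq n Qm \<Omega> z) > 0" if "z \<in> U" for z
      using HR_pos that by blast
    show "invertible (transpose (wp n Qm \<Omega> z))" if "z \<in> U" for z
      using wp_posdef that by (intro invertible_transpose_if_positive_definite) blast
  qed
  show ?thesis
    using pair_D2_cnj_Omega pair_D2_cnj_D1 D2_commute by blast
qed

end
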